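(* For every graph $G$ and integer $m\ge 1$, the generalised windmill $W^{(m)}_G=K_1+\bigcup_{i=1}^m G_i$, where $G_1,\dots,G_m$ are vertex-disjoint copies of $G$, satisfies $f^-(W^{(m)}_G)=m\cdot f^-(G)$ and $f^+(W^{(m)}_G)=m\cdot f^+(G)$.
   Context: All graphs are finite, simple, undirected and connected. $N[v]=N(v)\cup\{v\}$ is the closed neighbourhood. A chromatic colouring of $G$ is a proper vertex colouring $c:V(G)\to\{c_1,\dots,c_{\chi(G)}\}$. With respect to $c$, a vertex $v$ yields a rainbow neighbourhood if $N[v]$ contains a vertex of each colour $c_1,\dots,c_{\chi(G)}$; $r_\chi(G)$ is the number of such vertices, and $r^-_\chi(G)$, $r^+_\chi(G)$ are its minimum and maximum over all chromatic colourings of $G$. Fading: for a set $F\subseteq V(G)$ (a fade set), the vertices of $F$ receive a transparent colour $c^\circ$ not among $c_1,\dots,c_{\chi(G)}$; after fading, $v$ yields a rainbow neighbourhood iff for every $i$ some vertex of $N[v]\setminus F$ has colour $c_i$. The fading number $f^-(G)$ is the maximum $|F|$ over chromatic colourings $c$ attaining $r_\chi=r^-_\chi(G)$ and fade sets $F$ such that, after fading $F$, the number of vertices yielding rainbow neighbourhoods is still $r^-_\chi(G)$; $f^+(G)$ is defined analogously with $r^+_\chi(G)$. The join $G_1+G_2$ of vertex-disjoint graphs is $G_1\cup G_2$ together with all edges joining a vertex of $G_1$ to a vertex of $G_2$. *)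

theory Defs
  imports Main
begin

definition graph :: "'v set \<Rightarrow> ('v \<Rightarrow> 'v \<Rightarrow> bool) \<Rightarrow> bool" where
  "graph V E \<longleftrightarrow> finite V \<and> V \<noteq> {}
     \<and> (\<forall>u v. E u v \<longrightarrow> u \<in> V \<and> v \<in> V)
     \<and> (\<forall>u v. E u v \<longrightarrow> E v u)
     \<and> (\<forall>v. \<not> E v v)
     \<and> (\<forall>u\<in>V. \<forall>v\<in>V. E\<^sup>*\<^sup>* u v)"

text \<open>Proper colourings with colours 0,...,k-1 (colour c_i is i-1).\<close>
definition proper_col :: "'v set \<Rightarrow> ('v \<Rightarrow> 'v \<Rightarrow> bool) \<Rightarrow> ('v \<Rightarrow> nat) \<Rightarrow> nat \<Rightarrow> bool" where
  "proper_col V E c k \<longleftrightarrow> (\<forall>v\<in>V. c v < k) \<and> (\<forall>u\<in>V. \<forall>v\<in>V. E u v \<longrightarrow> c u \<noteq> c v)"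

definition chi :: "'v set \<Rightarrow> ('v \<Rightarrow> 'v \<Rightarrow> bool) \<Rightarrow> nat" where
  "chi V E = (LEAST k. \<exists>c. proper_col V E c k)"

definition chromatic_col :: "'v set \<Rightarrow> ('v \<Rightarrow> 'v \<Rightarrow> bool) \<Rightarrow> ('v \<Rightarrow> nat) \<Rightarrow> bool" where
  "chromatic_col V E c \<longleftrightarrow> proper_col V E c (chi V E)"

definition cnbhd :: "'v set \<Rightarrow> ('v \<Rightarrow> 'v \<Rightarrow> bool) \<Rightarrow> 'v \<Rightarrow> 'v set" where
  "cnbhd V E v = {u \<in> V. u = v \<or> E v u}"

definition rainbow_faded :: "'v set \<Rightarrow> ('v \<Rightarrow> 'v \<Rightarrow> bool) \<Rightarrow> ('v \<Rightarrow> nat) \<Rightarrow> 'v set \<Rightarrow> 'v \<Rightarrow> bool" where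
  "rainbow_faded V E c F v \<longleftrightarrow> (\<forall>i < chi V E. \<exists>u \<in> cnbhd V E v - F. c u = i)"

definition r_faded :: "'v set \<Rightarrow> ('v \<Rightarrow> 'v \<Rightarrow> bool) \<Rightarrow> ('v \<Rightarrow> nat) \<Rightarrow> 'v set \<Rightarrow> nat" where
  "r_faded V E c F = card {v \<in> V. rainbow_faded V E c F v}"

definition r_chi :: "'v set \<Rightarrow> ('v \<Rightarrow> 'v \<Rightarrow> bool) \<Rightarrow> ('v \<Rightarrow> nat) \<Rightarrow> nat" where
  "r_chi V E c = r_faded V E c {}"

definition r_minus :: "'v set \<Rightarrow> ('v \<Rightarrow> 'v \<Rightarrow> bool) \<Rightarrow> nat" where
  "r_minus V E = Min {r_chi V E c | c. chromatic_col V E c}"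

definition r_plus :: "'v set \<Rightarrow> ('v \<Rightarrow> 'v \<Rightarrow> bool) \<Rightarrow> nat" where
  "r_plus V E = Max {r_chi V E c | c. chromatic_col V E c}"

definition f_minus :: "'v set \<Rightarrow> ('v \<Rightarrow> 'v \<Rightarrow> bool) \<Rightarrow> nat" where
  "f_minus V E = Max {card F | c F. chromatic_col V E c \<and> r_chi V E c = r_minus V E
                         \<and> F \<subseteq> V \<and> r_faded V E c F = r_minus V E}"

definition f_plus :: "'v set \<Rightarrow> ('v \<Rightarrow> 'v \<Rightarrow> bool) \<Rightarrow> nat" where
  "f_plus V E = Max {card F | c F. chromatic_col V E c \<and> r_chi V E c = r_plus V E
                         \<and> F \<subseteq> V \<and> r_faded V E c F = r_plus V E}"

text \<open>Join of two vertex-disjoint graphs (disjointness via the sum type).\<close>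
definition join_V :: "'a set \<Rightarrow> 'b set \<Rightarrow> ('a + 'b) set" where
  "join_V V1 V2 = Inl ` V1 \<union> Inr ` V2"

fun join_E :: "'a set \<Rightarrow> ('a \<Rightarrow> 'a \<Rightarrow> bool) \<Rightarrow> 'b set \<Rightarrow> ('b \<Rightarrow> 'b \<Rightarrow> bool)
                 \<Rightarrow> 'a + 'b \<Rightarrow> 'a + 'b \<Rightarrow> bool" where
  "join_E V1 E1 V2 E2 (Inl x) (Inl y) = E1 x y"
| "join_E V1 E1 V2 E2 (Inr x) (Inr y) = E2 x y"
| "join_E V1 E1 V2 E2 (Inl x) (Inr y) = (x \<in> V1 \<and> y \<in> V2)"
| "join_E V1 E1 V2 E2 (Inr x) (Inl y) = (x \<in> V2 \<and> y \<in> V1)"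

definition copies_V :: "nat \<Rightarrow> 'a set \<Rightarrow> ('a \<times> nat) set" where
  "copies_V m V = V \<times> {1..m}"

definition copies_E :: "nat \<Rightarrow> ('a \<Rightarrow> 'a \<Rightarrow> bool) \<Rightarrow> 'a \<times> nat \<Rightarrow> 'a \<times> nat \<Rightarrow> bool" where
  "copies_E m E x y \<longleftrightarrow> snd x = snd y \<and> snd x \<in> {1..m} \<and> E (fst x) (fst y)"

definition K1_V :: "unit set" where "K1_V = {()}"
definition K1_E :: "unit \<Rightarrow> unit \<Rightarrow> bool" where "K1_E x y = False"

definition windmill_V :: "nat \<Rightarrow> 'a set \<Rightarrow> (unit + 'a \<times> nat) set" where
  "windmill_V m V = join_V K1_V (copies_V m V)"

definition windmill_E :: "nat \<Rightarrow> 'a set \<Rightarrow> ('a \<Rightarrow> 'a \<Rightarrow> bool)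
                           \<Rightarrow> unit + 'a \<times> nat \<Rightarrow> unit + 'a \<times> nat \<Rightarrow> bool" where
  "windmill_E m V E = join_E K1_V K1_E (copies_V m V) (copies_E m E)"

end

theory Submission
  imports Defs
begin

text \<open>In a proper colouring of the windmill the apex, being adjacent to every other vertex, is
  the only vertex of its colour. Hence \<open>\<chi>(W) = \<chi>(G) + 1\<close>, and deleting the apex colour turns
  a chromatic colouring of \<open>W\<close> into chromatic colourings of the \<open>m\<close> copies of \<open>G\<close>. A vertex of a
  copy is rainbow in \<open>W\<close> iff the apex is unfaded and the vertex is rainbow in its copy, and the
  apex is rainbow as soon as any vertex is. So \<open>r(W) = 1 + \<Sum>\<^sub>i r(G\<^sub>i)\<close>, which gives
  \<open>r\<^sup>\<plusminus>(W) = 1 + m r\<^sup>\<plusminus>(G)\<close>. A fade set keeping \<open>r\<^sup>\<plusminus>(W)\<close> must spare the apex, and since every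
  \<open>r(G\<^sub>i)\<close> lies on the same side of \<open>r\<^sup>\<plusminus>(G)\<close>, it restricts to an admissible fade set in every
  copy; conversely, copying an optimal fade set of \<open>G\<close> into all copies is admissible for \<open>W\<close>.\<close>

lemma chi_le: "proper_col V E c k \<Longrightarrow> chi V E \<le> k"
  unfolding chi_def by (rule Least_le) blast

lemma chromatic_col_if_proper_col: "proper_col V E c k \<Longrightarrow> \<exists>c'. chromatic_col V E c'"
  unfolding chromatic_col_def chi_def using LeastI[of "\<lambda>k. \<exists>c. proper_col V E c k" k] by blast

lemma chromatic_col_exists:
  assumes "finite V" and "\<And>v. \<not> E v v"
  shows "\<exists>c. chromatic_col V E c"
proof -
  obtain f :: "_ \<Rightarrow> nat" and n where f: "f ` V = {i. i < n}" "inj_on f V"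
    using finite_imp_inj_to_nat_seg[OF assms(1)] by blast
  have "proper_col V E f n"
    using f assms(2) unfolding proper_col_def inj_on_def by blast
  then show ?thesis
    by (rule chromatic_col_if_proper_col)
qed

lemma graph_chromatic_col_exists:
  assumes "graph V E"
  shows "\<exists>c. chromatic_col V E c"
proof (rule chromatic_col_exists)
  show "finite V" "\<And>v. \<not> E v v"
    using assms unfolding graph_def by blast+
qed

lemma proper_col_drop_top_colour:
  assumes pc: "proper_col V E c k" and sym: "\<And>u v. E u v \<Longrightarrow> E v u"
    and missing: "\<And>v. v \<in> V \<Longrightarrow> c v = k - 1 \<Longrightarrow> \<exists>j < k - 1. \<forall>u \<in> cnbhd V E v. c u \<noteq> j"
  shows "\<exists>c'. proper_col V E c' (k - 1)"
proof -
  define c' where "c' v = (if c v = k - 1 then SOME j. j < k - 1 \<and> (\<forall>u \<in> cnbhd V E v. c u \<noteq> j)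
    else c v)" for v
  have top: "c' v < k - 1 \<and> (\<forall>u \<in> cnbhd V E v. c u \<noteq> c' v)" if "v \<in> V" "c v = k - 1" for v
    using someI_ex[OF missing[OF that]] that(2) unfolding c'_def by simp
  have other: "c' v = c v \<and> c v < k - 1" if "v \<in> V" "c v \<noteq> k - 1" for v
    using pc that unfolding c'_def proper_col_def by fastforce
  have "c' u \<noteq> c' v" if "u \<in> V" "v \<in> V" "E u v" for u v
  proof -
    have "c u \<noteq> c v" "v \<in> cnbhd V E u" "u \<in> cnbhd V E v"
      using pc that sym unfolding proper_col_def cnbhd_def by auto
    consider "c u = k - 1" | "c v = k - 1" | "c u \<noteq> k - 1" "c v \<noteq> k - 1"
      by blast
    then show ?thesis
    proof cases
      case 1
      then show ?thesis
        using top[OF that(1) 1] other[OF that(2)] \<open>c u \<noteq> c v\<close> \<open>v \<in> cnbhd V E u\<close> by auto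
    next
      case 2
      then show ?thesis
        using top[OF that(2) 2] other[OF that(1)] \<open>c u \<noteq> c v\<close> \<open>u \<in> cnbhd V E v\<close> by auto
    next
      case 3
      then show ?thesis
        using other that(1,2) \<open>c u \<noteq> c v\<close> by simp
    qed
  qed
  moreover have "c' v < k - 1" if "v \<in> V" for v
    using top[OF that] other[OF that] by (cases "c v = k - 1") auto
  ultimately show ?thesis
    unfolding proper_col_def by blast
qed

text \<open>If no vertex were rainbow, every vertex of the top colour would miss another colour in its
  closed neighbourhood and could be recoloured with it, leaving a proper colouring with fewer
  colours.\<close>
lemma rainbow_vertex_exists:
  assumes cc: "chromatic_col V E c" and "V \<noteq> {}" and sym: "\<And>u v. E u v \<Longrightarrow> E v u"
  shows "\<exists>v \<in> V. rainbow_faded V E c {} v"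
proof (rule ccontr)
  assume none: "\<not> ?thesis"
  have "\<exists>j < chi V E - 1. \<forall>u \<in> cnbhd V E v. c u \<noteq> j" if "v \<in> V" "c v = chi V E - 1" for v
  proof -
    have "\<not> rainbow_faded V E c {} v"
      using none that(1) by blast
    then obtain j where j: "j < chi V E" "\<forall>u \<in> cnbhd V E v. c u \<noteq> j"
      unfolding rainbow_faded_def by auto
    moreover have "v \<in> cnbhd V E v"
      using that(1) unfolding cnbhd_def by simp
    ultimately have "j < chi V E - 1"
      using that(2) by fastforce
    with j show ?thesis
      by blast
  qed
  then obtain c' where "proper_col V E c' (chi V E - 1)"
    using proper_col_drop_top_colour[OF cc[unfolded chromatic_col_def] sym] by blast
  moreover have "0 < chi V E"
    using cc \<open>V \<noteq> {}\<close> unfolding chromatic_col_def proper_col_def by fastforce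
  ultimately show False
    using chi_le by fastforce
qed

lemma r_faded_cong:
  "(\<And>v. v \<in> V \<Longrightarrow> c v = d v) \<Longrightarrow> r_faded V E c F = r_faded V E d F"
  unfolding r_faded_def rainbow_faded_def cnbhd_def by (rule arg_cong[where f = card]) auto

lemma r_faded_le_card: "finite V \<Longrightarrow> r_faded V E c F \<le> card V"
  unfolding r_faded_def by (rule card_mono) auto

lemma r_faded_le_r_chi: "finite V \<Longrightarrow> r_faded V E c F \<le> r_chi V E c"
  unfolding r_chi_def r_faded_def rainbow_faded_def by (rule card_mono) auto

lemma r_chi_pos:
  assumes "graph V E" and "chromatic_col V E c"
  shows "0 < r_chi V E c"
proof -
  have "finite V" "V \<noteq> {}" "\<And>u v. E u v \<Longrightarrow> E v u"
    using assms(1) unfolding graph_def by blast+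
  then obtain v where "v \<in> V" "rainbow_faded V E c {} v"
    using rainbow_vertex_exists[OF assms(2)] by blast
  with \<open>finite V\<close> show ?thesis
    unfolding r_chi_def r_faded_def by (auto simp: card_gt_0_iff)
qed

lemma finite_r_chi_values: "finite V \<Longrightarrow> finite {r_chi V E c | c. chromatic_col V E c}"
  by (rule finite_subset[of _ "{..card V}"]) (auto simp: r_chi_def intro: r_faded_le_card)

lemma
  assumes "graph V E"
  shows r_minus_le: "chromatic_col V E c \<Longrightarrow> r_minus V E \<le> r_chi V E c"
    and r_minus_attained: "\<exists>c. chromatic_col V E c \<and> r_chi V E c = r_minus V E"
    and r_plus_ge: "chromatic_col V E c \<Longrightarrow> r_chi V E c \<le> r_plus V E"
    and r_plus_attained: "\<exists>c. chromatic_col V E c \<and> r_chi V E c = r_plus V E"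
proof -
  have "finite V"
    using assms unfolding graph_def by blast
  then have fin: "finite {r_chi V E c | c. chromatic_col V E c}"
    by (rule finite_r_chi_values)
  obtain c0 where "chromatic_col V E c0"
    using graph_chromatic_col_exists[OF assms] by blast
  then have ne: "{r_chi V E c | c. chromatic_col V E c} \<noteq> {}"
    by blast
  show "chromatic_col V E c \<Longrightarrow> r_minus V E \<le> r_chi V E c"
    unfolding r_minus_def using Min_le[OF fin] by blast
  show "\<exists>c. chromatic_col V E c \<and> r_chi V E c = r_minus V E"
    unfolding r_minus_def using Min_in[OF fin ne] by auto
  show "chromatic_col V E c \<Longrightarrow> r_chi V E c \<le> r_plus V E"
    unfolding r_plus_def using Max_ge[OF fin] by blast
  show "\<exists>c. chromatic_col V E c \<and> r_chi V E c = r_plus V E"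
    unfolding r_plus_def using Max_in[OF fin ne] by auto
qed

definition fade_sizes :: "'v set \<Rightarrow> ('v \<Rightarrow> 'v \<Rightarrow> bool) \<Rightarrow> nat \<Rightarrow> nat set" where
  "fade_sizes V E T = {card F | c F. chromatic_col V E c \<and> r_chi V E c = T
                          \<and> F \<subseteq> V \<and> r_faded V E c F = T}"

lemma f_minus_eq_Max_fade_sizes: "f_minus V E = Max (fade_sizes V E (r_minus V E))"
  unfolding f_minus_def fade_sizes_def ..

lemma f_plus_eq_Max_fade_sizes: "f_plus V E = Max (fade_sizes V E (r_plus V E))"
  unfolding f_plus_def fade_sizes_def ..

lemma finite_fade_sizes: "finite V \<Longrightarrow> finite (fade_sizes V E T)"
  unfolding fade_sizes_def
  by (rule finite_subset[of _ "card ` Pow V"]) auto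

lemma zero_in_fade_sizes: "chromatic_col V E c \<Longrightarrow> 0 \<in> fade_sizes V E (r_chi V E c)"
  unfolding fade_sizes_def r_chi_def by force

text \<open>\<open>squeeze a\<close> closes the gap left by deleting colour \<open>a\<close>; \<open>unsqueeze a\<close> is its inverse.\<close>
definition squeeze :: "nat \<Rightarrow> nat \<Rightarrow> nat" where
  "squeeze a x = (if a < x then x - 1 else x)"

definition unsqueeze :: "nat \<Rightarrow> nat \<Rightarrow> nat" where
  "unsqueeze a j = (if j < a then j else Suc j)"

lemma squeeze_inj: "x \<noteq> a \<Longrightarrow> y \<noteq> a \<Longrightarrow> squeeze a x = squeeze a y \<Longrightarrow> x = y"
  by (auto simp: squeeze_def split: if_splits)

lemma squeeze_less: "x \<noteq> a \<Longrightarrow> x < Suc n \<Longrightarrow> a < Suc n \<Longrightarrow> squeeze a x < n"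
  by (auto simp: squeeze_def)

lemma squeeze_id: "x < a \<Longrightarrow> squeeze a x = x"
  by (simp add: squeeze_def)

lemma squeeze_unsqueeze: "squeeze a (unsqueeze a j) = j"
  by (simp add: squeeze_def unsqueeze_def)

lemma unsqueeze_neq: "unsqueeze a j \<noteq> a"
  by (simp add: unsqueeze_def)

lemma unsqueeze_less: "j < n \<Longrightarrow> unsqueeze a j < Suc n"
  by (simp add: unsqueeze_def)

definition windmill_col :: "nat \<Rightarrow> ('a \<Rightarrow> nat) \<Rightarrow> unit + 'a \<times> nat \<Rightarrow> nat" where
  "windmill_col k c = case_sum (\<lambda>_. k) (\<lambda>p. c (fst p))"

definition copy_col :: "(unit + 'a \<times> nat \<Rightarrow> nat) \<Rightarrow> nat \<Rightarrow> 'a \<Rightarrow> nat" where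
  "copy_col c i v = squeeze (c (Inl ())) (c (Inr (v, i)))"

definition copy_fade :: "(unit + 'a \<times> nat) set \<Rightarrow> nat \<Rightarrow> 'a set" where
  "copy_fade F i = {v. Inr (v, i) \<in> F}"

lemma copy_col_windmill_col: "c v < k \<Longrightarrow> copy_col (windmill_col k c) i v = c v"
  by (simp add: copy_col_def windmill_col_def squeeze_id)

lemma r_faded_copy_col_windmill_col:
  assumes "chromatic_col V E c"
  shows "r_faded V E (copy_col (windmill_col (chi V E) c) i) F = r_faded V E c F"
proof (rule r_faded_cong)
  fix v assume "v \<in> V"
  then show "copy_col (windmill_col (chi V E) c) i v = c v"
    using assms unfolding chromatic_col_def proper_col_def by (simp add: copy_col_windmill_col)
qed

locale windmill_graph =
  fixes V :: "'a set" and E :: "'a \<Rightarrow> 'a \<Rightarrow> bool" and m :: nat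
  assumes graph: "graph V E" and copies_pos: "1 \<le> m"
begin

abbreviation "VW \<equiv> windmill_V m V"
abbreviation "EW \<equiv> windmill_E m V E"

lemma finite_V: "finite V"
  using graph unfolding graph_def by blast

lemma VW_eq: "VW = insert (Inl ()) (Inr ` (V \<times> {1..m}))"
  by (auto simp: windmill_V_def join_V_def copies_V_def K1_V_def)

lemma finite_VW: "finite VW"
  by (simp add: VW_eq finite_V)

lemma in_VW_simps [simp]:
  "Inl x \<in> VW"
  "Inr (v, i) \<in> VW \<longleftrightarrow> v \<in> V \<and> 1 \<le> i \<and> i \<le> m"
  by (auto simp: VW_eq)

lemma EW_simps [simp]:
  "EW (Inl x) (Inl y) = False"
  "EW (Inl x) (Inr (v, i)) \<longleftrightarrow> v \<in> V \<and> 1 \<le> i \<and> i \<le> m"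
  "EW (Inr (v, i)) (Inl x) \<longleftrightarrow> v \<in> V \<and> 1 \<le> i \<and> i \<le> m"
  "EW (Inr (v, i)) (Inr (w, j)) \<longleftrightarrow> i = j \<and> 1 \<le> i \<and> i \<le> m \<and> E v w"
  by (auto simp: windmill_E_def K1_E_def K1_V_def copies_V_def copies_E_def)

lemma cnbhd_apex: "cnbhd VW EW (Inl ()) = VW"
  unfolding cnbhd_def by (auto simp: VW_eq)

lemma apex_colour_unique:
  assumes "proper_col VW EW c k" and "z \<in> VW" and "c z = c (Inl ())"
  shows "z = Inl ()"
  using assms unfolding proper_col_def by (cases z) force+

lemma windmill_col_proper:
  assumes "proper_col V E c k"
  shows "proper_col VW EW (windmill_col k c) (Suc k)"
  unfolding proper_col_def
proof (intro conjI ballI impI)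
  show "windmill_col k c z < Suc k" if "z \<in> VW" for z
    using assms that by (auto simp: VW_eq windmill_col_def proper_col_def)
  show "windmill_col k c u \<noteq> windmill_col k c v" if "u \<in> VW" "v \<in> VW" "EW u v" for u v
    using assms that by (auto simp: VW_eq windmill_col_def proper_col_def)
qed

lemma copy_col_proper:
  assumes pc: "proper_col VW EW c (Suc k)" and i: "i \<in> {1..m}"
  shows "proper_col V E (copy_col c i) k"
proof -
  have apex: "c (Inl ()) < Suc k"
    using pc unfolding proper_col_def by simp
  have copy: "c (Inr (v, i)) < Suc k \<and> c (Inr (v, i)) \<noteq> c (Inl ())" if "v \<in> V" for v
    using pc apex_colour_unique[OF pc, of "Inr (v, i)"] that i unfolding proper_col_def by auto
  have "c (Inr (u, i)) \<noteq> c (Inr (v, i))" if "u \<in> V" "v \<in> V" "E u v" for u v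
    using pc that i unfolding proper_col_def by simp
  then show ?thesis
    unfolding proper_col_def copy_col_def using copy apex squeeze_less squeeze_inj by metis
qed

lemma chi_windmill: "chi VW EW = Suc (chi V E)"
proof -
  obtain c0 where "chromatic_col V E c0"
    using graph_chromatic_col_exists[OF graph] by blast
  then have pc0: "proper_col VW EW (windmill_col (chi V E) c0) (Suc (chi V E))"
    unfolding chromatic_col_def by (rule windmill_col_proper)
  then have le: "chi VW EW \<le> Suc (chi V E)"
    by (rule chi_le)
  obtain c where pc: "proper_col VW EW c (chi VW EW)"
    using chromatic_col_if_proper_col[OF pc0] unfolding chromatic_col_def by blast
  then have "c (Inl ()) < chi VW EW"
    unfolding proper_col_def by simp
  then obtain k where k: "chi VW EW = Suc k"
    using less_imp_Suc_add by blast
  have "proper_col V E (copy_col c 1) k"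
    using copy_col_proper[of c k 1] pc copies_pos unfolding k by simp
  then have "chi V E \<le> k"
    by (rule chi_le)
  with le k show ?thesis
    by simp
qed

lemma chromatic_col_windmill:
  "chromatic_col VW EW c \<longleftrightarrow> proper_col VW EW c (Suc (chi V E))"
  unfolding chromatic_col_def chi_windmill ..

lemma chromatic_col_windmill_col:
  "chromatic_col V E c \<Longrightarrow> chromatic_col VW EW (windmill_col (chi V E) c)"
  unfolding chromatic_col_windmill by (simp add: chromatic_col_def windmill_col_proper)

lemma chromatic_col_copy_col:
  "chromatic_col VW EW c \<Longrightarrow> i \<in> {1..m} \<Longrightarrow> chromatic_col V E (copy_col c i)"
  unfolding chromatic_col_windmill by (simp add: chromatic_col_def copy_col_proper)

text \<open>The apex is the only vertex carrying its colour, so every rainbow neighbourhood contains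
  it unfaded.\<close>
lemma rainbow_apex:
  assumes cc: "chromatic_col VW EW c" and rb: "rainbow_faded VW EW c F z"
  shows "Inl () \<notin> F" and "rainbow_faded VW EW c F (Inl ())"
proof -
  have pc: "proper_col VW EW c (Suc (chi V E))"
    using cc chromatic_col_windmill by blast
  then have "c (Inl ()) < chi VW EW"
    unfolding proper_col_def chi_windmill by simp
  then obtain u where u: "u \<in> cnbhd VW EW z - F" "c u = c (Inl ())"
    using rb unfolding rainbow_faded_def by blast
  then have "u = Inl ()"
    using apex_colour_unique[OF pc] unfolding cnbhd_def by blast
  with u show "Inl () \<notin> F"
    by simp
  have "cnbhd VW EW z \<subseteq> VW"
    unfolding cnbhd_def by blast
  then show "rainbow_faded VW EW c F (Inl ())"
    using rb unfolding rainbow_faded_def cnbhd_apex by blast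
qed

lemma cnbhd_copy:
  assumes "v \<in> V" and "i \<in> {1..m}"
  shows "cnbhd VW EW (Inr (v, i)) = insert (Inl ()) ((\<lambda>w. Inr (w, i)) ` cnbhd V E v)"
  using assms unfolding cnbhd_def by (auto simp: VW_eq)

lemma copy_col_eq_squeeze_iff:
  assumes "proper_col VW EW c k" and "w \<in> V" and "i \<in> {1..m}" and "x \<noteq> c (Inl ())"
  shows "copy_col c i w = squeeze (c (Inl ())) x \<longleftrightarrow> c (Inr (w, i)) = x"
  using apex_colour_unique[OF assms(1), of "Inr (w, i)"] assms squeeze_inj
  unfolding copy_col_def by auto

lemma rainbow_copy_if_rainbow_windmill:
  assumes cc: "chromatic_col VW EW c" and v: "v \<in> V" and i: "i \<in> {1..m}"
    and rb: "rainbow_faded VW EW c F (Inr (v, i))"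
  shows "rainbow_faded V E (copy_col c i) (copy_fade F i) v"
  unfolding rainbow_faded_def
proof (intro allI impI)
  fix j assume j: "j < chi V E"
  let ?a = "c (Inl ())"
  obtain u where u: "u \<in> cnbhd VW EW (Inr (v, i)) - F" "c u = unsqueeze ?a j"
    using rb unsqueeze_less[OF j] unfolding rainbow_faded_def chi_windmill by blast
  moreover have "u \<noteq> Inl ()"
    using u(2) unsqueeze_neq by metis
  ultimately obtain w where w: "u = Inr (w, i)" "w \<in> cnbhd V E v"
    unfolding cnbhd_copy[OF v i] by blast
  then have "w \<in> V"
    unfolding cnbhd_def by blast
  then have "copy_col c i w = j"
    using copy_col_eq_squeeze_iff[OF cc[unfolded chromatic_col_windmill] _ i unsqueeze_neq]
      u(2) w(1) squeeze_unsqueeze by simp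
  moreover have "w \<notin> copy_fade F i"
    using u(1) w(1) unfolding copy_fade_def by blast
  ultimately show "\<exists>w \<in> cnbhd V E v - copy_fade F i. copy_col c i w = j"
    using w(2) by blast
qed

lemma rainbow_windmill_if_rainbow_copy:
  assumes cc: "chromatic_col VW EW c" and v: "v \<in> V" and i: "i \<in> {1..m}"
    and apex: "Inl () \<notin> F" and rb: "rainbow_faded V E (copy_col c i) (copy_fade F i) v"
  shows "rainbow_faded VW EW c F (Inr (v, i))"
  unfolding rainbow_faded_def chi_windmill
proof (intro allI impI)
  fix x assume x: "x < Suc (chi V E)"
  let ?a = "c (Inl ())"
  have pc: "proper_col VW EW c (Suc (chi V E))"
    using cc chromatic_col_windmill by blast
  show "\<exists>u \<in> cnbhd VW EW (Inr (v, i)) - F. c u = x"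
  proof (cases "x = ?a")
    case True
    have "Inl () \<in> cnbhd VW EW (Inr (v, i)) - F"
      using apex unfolding cnbhd_copy[OF v i] by simp
    with True show ?thesis
      by blast
  next
    case False
    have "?a < Suc (chi V E)"
      using pc unfolding proper_col_def by simp
    then obtain w where w: "w \<in> cnbhd V E v - copy_fade F i" "copy_col c i w = squeeze ?a x"
      using rb squeeze_less[OF False x] unfolding rainbow_faded_def by blast
    then have "w \<in> V"
      unfolding cnbhd_def by blast
    then have "c (Inr (w, i)) = x"
      using copy_col_eq_squeeze_iff[OF pc _ i False] w(2) by blast
    moreover have "Inr (w, i) \<in> cnbhd VW EW (Inr (v, i)) - F"
      using w(1) unfolding cnbhd_copy[OF v i] copy_fade_def by blast
    ultimately show ?thesis
      by blast
  qed
qed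

lemma rainbow_copy_iff:
  assumes "chromatic_col VW EW c" and "v \<in> V" and "i \<in> {1..m}"
  shows "rainbow_faded VW EW c F (Inr (v, i))
    \<longleftrightarrow> Inl () \<notin> F \<and> rainbow_faded V E (copy_col c i) (copy_fade F i) v"
  using rainbow_apex(1) rainbow_copy_if_rainbow_windmill rainbow_windmill_if_rainbow_copy assms
  by blast

lemma card_windmill_filter:
  "card {z \<in> VW. P z} = (if P (Inl ()) then 1 else 0) + (\<Sum>i = 1..m. card {v \<in> V. P (Inr (v, i))})"
proof -
  let ?C = "\<lambda>i. (\<lambda>v. Inr (v, i) :: unit + 'a \<times> nat) ` {v \<in> V. P (Inr (v, i))}"
  have split: "{z \<in> VW. P z} = (if P (Inl ()) then {Inl ()} else {}) \<union> (\<Union>i \<in> {1..m}. ?C i)"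
    by (auto simp: VW_eq)
  have "card (\<Union>i \<in> {1..m}. ?C i) = (\<Sum>i = 1..m. card (?C i))"
    by (rule card_UN_disjoint[of "{1..m}" ?C]) (auto simp: finite_V)
  also have "\<dots> = (\<Sum>i = 1..m. card {v \<in> V. P (Inr (v, i))})"
    by (intro sum.cong refl card_image) (simp add: inj_on_def)
  finally show ?thesis
    unfolding split by (subst card_Un_disjoint) (auto simp: finite_V)
qed

lemma card_windmill_fade_set:
  assumes "F \<subseteq> VW" and "Inl () \<notin> F"
  shows "card F = (\<Sum>i = 1..m. card (copy_fade F i))"
proof -
  have "{z \<in> VW. z \<in> F} = F" "\<And>i. {v \<in> V. Inr (v, i) \<in> F} = copy_fade F i"
    using assms(1) unfolding copy_fade_def by (auto simp: VW_eq)
  then show ?thesis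
    using card_windmill_filter[of "\<lambda>z. z \<in> F"] assms(2) by simp
qed

lemma r_faded_windmill:
  assumes cc: "chromatic_col VW EW c" and "Inl () \<notin> F"
  shows "r_faded VW EW c F = (if rainbow_faded VW EW c F (Inl ()) then 1 else 0)
    + (\<Sum>i = 1..m. r_faded V E (copy_col c i) (copy_fade F i))"
proof -
  have "{v \<in> V. rainbow_faded VW EW c F (Inr (v, i))}
      = {v \<in> V. rainbow_faded V E (copy_col c i) (copy_fade F i) v}" if "i \<in> {1..m}" for i
    using rainbow_copy_iff[OF cc _ that] assms(2) by blast
  then have "(\<Sum>i = 1..m. card {v \<in> V. rainbow_faded VW EW c F (Inr (v, i))})
      = (\<Sum>i = 1..m. r_faded V E (copy_col c i) (copy_fade F i))"
    unfolding r_faded_def by (intro sum.cong) simp_all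
  then show ?thesis
    unfolding r_faded_def[of VW] card_windmill_filter by simp
qed

lemma r_faded_windmill_apex_faded:
  assumes "chromatic_col VW EW c" and "Inl () \<in> F"
  shows "r_faded VW EW c F = 0"
proof -
  have "{z \<in> VW. rainbow_faded VW EW c F z} = {}"
    using rainbow_apex(1)[OF assms(1)] assms(2) by blast
  then show ?thesis
    unfolding r_faded_def by (simp only: card.empty)
qed

lemma r_faded_windmill_Suc:
  assumes cc: "chromatic_col VW EW c" and "Inl () \<notin> F"
    and i: "i \<in> {1..m}" and pos: "0 < r_faded V E (copy_col c i) (copy_fade F i)"
  shows "r_faded VW EW c F = Suc (\<Sum>i = 1..m. r_faded V E (copy_col c i) (copy_fade F i))"
proof -
  obtain v where "v \<in> V" "rainbow_faded V E (copy_col c i) (copy_fade F i) v"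
    using pos unfolding r_faded_def by (auto simp: card_gt_0_iff)
  then have "rainbow_faded VW EW c F (Inr (v, i))"
    using rainbow_copy_iff[OF cc _ i] assms(2) by blast
  then have "rainbow_faded VW EW c F (Inl ())"
    by (rule rainbow_apex(2)[OF cc])
  then show ?thesis
    using r_faded_windmill[OF cc assms(2)] by simp
qed

lemma r_chi_windmill:
  assumes cc: "chromatic_col VW EW c"
  shows "r_chi VW EW c = Suc (\<Sum>i = 1..m. r_chi V E (copy_col c i))"
proof -
  have "0 < r_chi V E (copy_col c 1)"
    using r_chi_pos[OF graph chromatic_col_copy_col[OF cc]] copies_pos by simp
  then show ?thesis
    using r_faded_windmill_Suc[OF cc, of "{}" 1] copies_pos
    unfolding r_chi_def copy_fade_def by simp
qed

lemma r_chi_windmill_col: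
  assumes "chromatic_col V E c"
  shows "r_chi VW EW (windmill_col (chi V E) c) = Suc (m * r_chi V E c)"
proof -
  have "r_chi V E (copy_col (windmill_col (chi V E) c) i) = r_chi V E c" for i
    unfolding r_chi_def using assms by (rule r_faded_copy_col_windmill_col)
  then show ?thesis
    using r_chi_windmill[OF chromatic_col_windmill_col[OF assms]] by simp
qed

lemma finite_r_chi_values_windmill: "finite {r_chi VW EW c | c. chromatic_col VW EW c}"
  using finite_VW by (rule finite_r_chi_values)

lemma r_minus_windmill: "r_minus VW EW = Suc (m * r_minus V E)"
  unfolding r_minus_def[of VW]
proof (rule Min_eqI[OF finite_r_chi_values_windmill])
  fix y assume "y \<in> {r_chi VW EW c | c. chromatic_col VW EW c}"
  then obtain c where c: "chromatic_col VW EW c" "y = r_chi VW EW c"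
    by blast
  have "(\<Sum>i = 1..m. r_minus V E) \<le> (\<Sum>i = 1..m. r_chi V E (copy_col c i))"
    by (intro sum_mono r_minus_le[OF graph] chromatic_col_copy_col[OF c(1)]) simp_all
  then show "Suc (m * r_minus V E) \<le> y"
    using r_chi_windmill[OF c(1)] c(2) by simp
next
  obtain c where "chromatic_col V E c" "r_chi V E c = r_minus V E"
    using r_minus_attained[OF graph] by blast
  then have "chromatic_col VW EW (windmill_col (chi V E) c)"
      "r_chi VW EW (windmill_col (chi V E) c) = Suc (m * r_minus V E)"
    by (simp_all add: chromatic_col_windmill_col r_chi_windmill_col)
  then show "Suc (m * r_minus V E) \<in> {r_chi VW EW c | c. chromatic_col VW EW c}"
    by force
qed

lemma r_plus_windmill: "r_plus VW EW = Suc (m * r_plus V E)"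
  unfolding r_plus_def[of VW]
proof (rule Max_eqI[OF finite_r_chi_values_windmill])
  fix y assume "y \<in> {r_chi VW EW c | c. chromatic_col VW EW c}"
  then obtain c where c: "chromatic_col VW EW c" "y = r_chi VW EW c"
    by blast
  have "(\<Sum>i = 1..m. r_chi V E (copy_col c i)) \<le> (\<Sum>i = 1..m. r_plus V E)"
    by (intro sum_mono r_plus_ge[OF graph] chromatic_col_copy_col[OF c(1)]) simp_all
  then show "y \<le> Suc (m * r_plus V E)"
    using r_chi_windmill[OF c(1)] c(2) by simp
next
  obtain c where "chromatic_col V E c" "r_chi V E c = r_plus V E"
    using r_plus_attained[OF graph] by blast
  then have "chromatic_col VW EW (windmill_col (chi V E) c)"
      "r_chi VW EW (windmill_col (chi V E) c) = Suc (m * r_plus V E)"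
    by (simp_all add: chromatic_col_windmill_col r_chi_windmill_col)
  then show "Suc (m * r_plus V E) \<in> {r_chi VW EW c | c. chromatic_col VW EW c}"
    by force
qed

lemma mult_in_fade_sizes_windmill:
  assumes "n \<in> fade_sizes V E T"
  shows "m * n \<in> fade_sizes VW EW (Suc (m * T))"
proof -
  obtain c F where c: "n = card F" "chromatic_col V E c" "r_chi V E c = T"
    and F: "F \<subseteq> V" "r_faded V E c F = T"
    using assms unfolding fade_sizes_def by blast
  define cW where "cW = windmill_col (chi V E) c"
  define FW :: "(unit + 'a \<times> nat) set" where "FW = Inr ` (F \<times> {1..m})"
  have cW: "chromatic_col VW EW cW"
    unfolding cW_def using c(2) by (rule chromatic_col_windmill_col)
  have copy_fade_FW: "copy_fade FW i = F" if "i \<in> {1..m}" for i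
    using that unfolding FW_def copy_fade_def by auto
  have copies: "r_faded V E (copy_col cW i) (copy_fade FW i) = T" if "i \<in> {1..m}" for i
    unfolding cW_def copy_fade_FW[OF that] r_faded_copy_col_windmill_col[OF c(2)] by (rule F(2))
  have one: "1 \<in> {1..m}"
    using copies_pos by simp
  have "0 < T"
    using r_chi_pos[OF graph c(2)] c(3) by simp
  moreover have "Inl () \<notin> FW"
    unfolding FW_def by blast
  ultimately have "r_faded VW EW cW FW = Suc (m * T)"
    using r_faded_windmill_Suc[OF cW _ one] copies[OF one] copies by simp
  moreover have "r_chi VW EW cW = Suc (m * T)"
    unfolding cW_def r_chi_windmill_col[OF c(2)] c(3) ..
  moreover have "FW \<subseteq> VW"
    using F(1) unfolding FW_def by auto
  moreover have "card FW = m * n"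
    unfolding FW_def c(1) by (subst card_image) (auto simp: inj_on_def card_cartesian_product)
  ultimately show ?thesis
    using cW unfolding fade_sizes_def by force
qed

lemma r_chi_copy_col_extremal:
  assumes T: "T = r_minus V E \<or> T = r_plus V E"
    and cc: "chromatic_col VW EW c" and r: "r_chi VW EW c = Suc (m * T)" and i: "i \<in> {1..m}"
  shows "r_chi V E (copy_col c i) = T"
proof -
  have sum: "(\<Sum>j = 1..m. T) = (\<Sum>j = 1..m. r_chi V E (copy_col c j))"
    using r_chi_windmill[OF cc] r by simp
  have copies: "chromatic_col V E (copy_col c j)" if "j \<in> {1..m}" for j
    using cc that by (rule chromatic_col_copy_col)
  from T show ?thesis
  proof
    assume "T = r_minus V E"
    then show ?thesis
      using sum_mono_inv[OF sum _ i] r_minus_le[OF graph copies] by simp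
  next
    assume "T = r_plus V E"
    then show ?thesis
      using sum_mono_inv[OF sum[symmetric] _ i] r_plus_ge[OF graph copies] by simp
  qed
qed

lemma card_copy_fade_in_fade_sizes:
  assumes T: "T = r_minus V E \<or> T = r_plus V E"
    and cc: "chromatic_col VW EW c" and r: "r_chi VW EW c = Suc (m * T)"
    and F: "F \<subseteq> VW" "r_faded VW EW c F = Suc (m * T)" and i: "i \<in> {1..m}"
  shows "card (copy_fade F i) \<in> fade_sizes V E T"
proof -
  have apex: "Inl () \<notin> F"
    using r_faded_windmill_apex_faded[OF cc] F(2) by auto
  have copies: "r_chi V E (copy_col c j) = T" if "j \<in> {1..m}" for j
    using r_chi_copy_col_extremal[OF T cc r that] .
  have le: "r_faded V E (copy_col c j) (copy_fade F j) \<le> T" if "j \<in> {1..m}" for j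
    using r_faded_le_r_chi[OF finite_V] copies[OF that] by metis
  then have "(\<Sum>j = 1..m. r_faded V E (copy_col c j) (copy_fade F j)) \<le> (\<Sum>j = 1..m. T)"
    by (rule sum_mono)
  moreover have "Suc (m * T) \<le> Suc (\<Sum>j = 1..m. r_faded V E (copy_col c j) (copy_fade F j))"
    using r_faded_windmill[OF cc apex] F(2) by simp
  ultimately have "(\<Sum>j = 1..m. r_faded V E (copy_col c j) (copy_fade F j)) = (\<Sum>j = 1..m. T)"
    by simp
  then have "r_faded V E (copy_col c i) (copy_fade F i) = T"
    using sum_mono_inv[where f = "\<lambda>j. r_faded V E (copy_col c j) (copy_fade F j)" and g = "\<lambda>_. T"]
      le i by blast
  moreover have "copy_fade F i \<subseteq> V"
    using F(1) i unfolding copy_fade_def by auto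
  ultimately show ?thesis
    using chromatic_col_copy_col[OF cc i] copies[OF i] unfolding fade_sizes_def by blast
qed

lemma Max_fade_sizes_windmill:
  assumes T: "T = r_minus V E \<or> T = r_plus V E"
  shows "Max (fade_sizes VW EW (Suc (m * T))) = m * Max (fade_sizes V E T)"
proof (rule Max_eqI)
  show "finite (fade_sizes VW EW (Suc (m * T)))"
    using finite_VW by (rule finite_fade_sizes)
  have fin: "finite (fade_sizes V E T)"
    using finite_V by (rule finite_fade_sizes)
  obtain c where "chromatic_col V E c" "r_chi V E c = T"
    using T r_minus_attained[OF graph] r_plus_attained[OF graph] by blast
  then have "0 \<in> fade_sizes V E T"
    using zero_in_fade_sizes by blast
  then show "m * Max (fade_sizes V E T) \<in> fade_sizes VW EW (Suc (m * T))"
    using Max_in[OF fin] by (intro mult_in_fade_sizes_windmill) blast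
  fix n assume "n \<in> fade_sizes VW EW (Suc (m * T))"
  then obtain c F where n: "n = card F" and cc: "chromatic_col VW EW c"
    and r: "r_chi VW EW c = Suc (m * T)" and F: "F \<subseteq> VW" "r_faded VW EW c F = Suc (m * T)"
    unfolding fade_sizes_def by blast
  have "Inl () \<notin> F"
    using r_faded_windmill_apex_faded[OF cc] F(2) by auto
  then have "n = (\<Sum>i = 1..m. card (copy_fade F i))"
    using card_windmill_fade_set F(1) n by simp
  also have "\<dots> \<le> (\<Sum>i = 1..m. Max (fade_sizes V E T))"
    using card_copy_fade_in_fade_sizes[OF T cc r F] Max_ge[OF fin] by (intro sum_mono) blast
  finally show "n \<le> m * Max (fade_sizes V E T)"
    by simp
qed

end

theorem mainTheorem10:
  fixes V :: "'a set" and E :: "'a \<Rightarrow> 'a \<Rightarrow> bool" and m :: nat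
  assumes "graph V E" and "m \<ge> 1"
  shows "f_minus (windmill_V m V) (windmill_E m V E) = m * f_minus V E
       \<and> f_plus (windmill_V m V) (windmill_E m V E) = m * f_plus V E"
proof -
  interpret windmill_graph V E m
    using assms by unfold_locales
  show ?thesis
    unfolding f_minus_eq_Max_fade_sizes f_plus_eq_Max_fade_sizes r_minus_windmill r_plus_windmill
    using Max_fade_sizes_windmill by blast
qed

end
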